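(* The logic ${\rm Linc}^-$ is consistent: for any fixed definition $\mathcal{D}$ and any formula $C$, it is not the case that both sequents $\vdash C$ and $\vdash C\supset\bot$ are derivable in ${\rm Linc}^-$.
   Context: Terms are simply typed $\lambda$-terms (with $\beta$ and $\eta$) over base types, including a distinguished type $o$ of formulae. A type is essentially first-order (efo) if generated by $\tau ::= k \mid \tau\to\tau$ with $k$ a base type other than $o$. To each predicate constant $p$ is associated a countably infinite set $\mathcal{P}_p$ of parameters $X^p$ of the same type as $p$. Formulae are $\beta\eta$-long normal terms of type $o$ given by $F ::= X^p\,\vec t \mid s =_\tau t \mid p\,\vec t \mid \bot\mid\top\mid F\land F\mid F\lor F\mid F\supset F\mid \forall_\tau x.F\mid\exists_\tau x.F$, with $\tau$ efo. A definition is a finite set of clauses $\forall\vec x.\,p\,\vec x \stackrel{\mu}{=} B\,p\,\vec x$ (inductive) or $\forall\vec x.\,p\,\vec x \stackrel{\nu}{=} B\,p\,\vec x$ (co-inductive), where $B$ is a closed term with no parameters and no free $p$; each predicate heads at most one clause, and clauses are non-mutually recursive. Sequents $\Gamma\vdash C$ have $\Gamma$ a multiset. Rules of ${\rm Linc}^-$: $init$ ($C\vdash C$); contraction and weakening on the left; multicut $mc$ (from $\Delta_i\vdash B_i$, $i=1..n$, $n>0$, and $B_1,\dots,B_n,\Gamma\vdash C$ infer $\Delta_1,\dots,\Delta_n,\Gamma\vdash C$); $\bot\mathcal{L}$, $\top\mathcal{R}$; standard intuitionistic left/right rules for $\land,\lor,\supset,\forall,\exists$ (eigenvariables fresh in $\forall\mathcal{R},\exists\mathcal{L}$;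 arbitrary terms, possibly with new eigenvariables, in $\forall\mathcal{L},\exists\mathcal{R}$); ${\rm eq}\mathcal{R}$: $\Gamma\vdash t=t$; ${\rm eq}\mathcal{L}$: from $\{\Gamma\rho\vdash C\rho\mid s\rho=_{\beta\eta}t\rho\}$ infer $s=t,\Gamma\vdash C$; for $p\,\vec x\stackrel{\mu}{=}B\,p\,\vec x$: ${\rm I}\mathcal{L}$ (from $B\,S\,\vec y\vdash S\,\vec y$ and $\Gamma,S\,\vec t\vdash C$ infer $\Gamma,p\,\vec t\vdash C$, $\vec y$ new), ${\rm I}\mathcal{R}$ (from $\Gamma\vdash B\,X^p\,\vec t$ infer $\Gamma\vdash p\,\vec t$, $X^p$ new), ${\rm I}\mathcal{R}_p$ (from $\Gamma\vdash B\,X^p\,\vec t$ infer $\Gamma\vdash X^p\,\vec t$); for $p\,\vec x\stackrel{\nu}{=}B\,p\,\vec x$: ${\rm CI}\mathcal{L}$ (from $B\,X^p\,\vec t,\Gamma\vdash C$ infer $p\,\vec t,\Gamma\vdash C$, $X^p$ new), ${\rm CI}\mathcal{L}_p$ (from $B\,X^p\,\vec t,\Gamma\vdash C$ infer $X^p\,\vec t,\Gamma\vdash C$), ${\rm CI}\mathcal{R}$ (from $\Gamma\vdash S\,\vec t$ and $S\,\vec y\vdash B\,S\,\vec y$ infer $\Gamma\vdash p\,\vec t$, $\vec y$ new). *)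

theory Defs
  imports Main "HOL-Library.Multiset"
begin

text \<open>Base types are Base n; TyO is the distinguished type o of formulae.\<close>
datatype ty = Base nat | TyO | Arr ty ty

fun efo :: "ty \<Rightarrow> bool" where
  "efo (Base n) = True"
| "efo TyO = False"
| "efo (Arr a b) = (efo a \<and> efo b)"

text \<open>Bv: bound variable (de Bruijn index); Fv n T: eigenvariable n of type T;
  Cn n T: function constant n of type T.\<close>
datatype trm = Bv nat | Fv nat ty | Cn nat ty | Lam ty trm | App trm trm

fun lift :: "nat \<Rightarrow> trm \<Rightarrow> trm" where
  "lift k (Bv i) = (if i < k then Bv i else Bv (Suc i))"
| "lift k (Fv n T) = Fv n T"
| "lift k (Cn n T) = Cn n T"
| "lift k (Lam T t) = Lam T (lift (Suc k) t)"
| "lift k (App s t) = App (lift k s) (lift k t)"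

fun liftn :: "nat \<Rightarrow> trm \<Rightarrow> trm" where
  "liftn 0 t = t"
| "liftn (Suc m) t = lift 0 (liftn m t)"

fun substt :: "trm \<Rightarrow> nat \<Rightarrow> trm \<Rightarrow> trm" where
  "substt (Bv i) k u = (if i < k then Bv i else if i = k then u else Bv (i - 1))"
| "substt (Fv n T) k u = Fv n T"
| "substt (Cn n T) k u = Cn n T"
| "substt (Lam T t) k u = Lam T (substt t (Suc k) (lift 0 u))"
| "substt (App s t) k u = App (substt s k u) (substt t k u)"

inductive hastype :: "ty list \<Rightarrow> trm \<Rightarrow> ty \<Rightarrow> bool" where
  "i < length G \<Longrightarrow> efo (G ! i) \<Longrightarrow> hastype G (Bv i) (G ! i)"
| "efo T \<Longrightarrow> hastype G (Fv n T) T"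
| "efo T \<Longrightarrow> hastype G (Cn n T) T"
| "efo T \<Longrightarrow> hastype (T # G) t U \<Longrightarrow> hastype G (Lam T t) (Arr T U)"
| "hastype G s (Arr T U) \<Longrightarrow> hastype G t T \<Longrightarrow> hastype G (App s t) U"

inductive conv :: "trm \<Rightarrow> trm \<Rightarrow> bool" where
  conv_refl: "conv t t"
| conv_sym: "conv s t \<Longrightarrow> conv t s"
| conv_trans: "conv s t \<Longrightarrow> conv t u \<Longrightarrow> conv s u"
| conv_app: "conv s s' \<Longrightarrow> conv t t' \<Longrightarrow> conv (App s t) (App s' t')"
| conv_lam: "conv s s' \<Longrightarrow> conv (Lam T s) (Lam T s')"
| conv_beta: "conv (App (Lam T s) t) (substt s 0 t)"
| conv_eta: "conv (Lam T (App (lift 0 s) (Bv 0))) s"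

text \<open>eigenvariable substitution (images are closed w.r.t. bound variables)\<close>
fun esub :: "(nat \<Rightarrow> ty \<Rightarrow> trm) \<Rightarrow> trm \<Rightarrow> trm" where
  "esub \<rho> (Bv i) = Bv i"
| "esub \<rho> (Fv n T) = \<rho> n T"
| "esub \<rho> (Cn n T) = Cn n T"
| "esub \<rho> (Lam T t) = Lam T (esub \<rho> t)"
| "esub \<rho> (App s t) = App (esub \<rho> s) (esub \<rho> t)"

definition wf_esub :: "(nat \<Rightarrow> ty \<Rightarrow> trm) \<Rightarrow> bool" where
  "wf_esub \<rho> \<longleftrightarrow> (\<forall>n T. efo T \<longrightarrow> hastype [] (\<rho> n T) T)"

fun fvt :: "trm \<Rightarrow> (nat \<times> ty) set" where
  "fvt (Bv i) = {}"
| "fvt (Fv n T) = {(n, T)}"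
| "fvt (Cn n T) = {}"
| "fvt (Lam T t) = fvt t"
| "fvt (App s t) = fvt s \<union> fvt t"

text \<open>A predicate constant carries its name and its argument types (so p has type
  T1 -> ... -> Tn -> o).  Par p i ts is the parameter X^p_i applied to ts (the set
  of parameters of p is indexed by nat).  PV ts is the bound predicate variable
  occurring in the body of a definitional clause (never in sequents).\<close>
type_synonym pred = "nat \<times> ty list"

datatype fm =
    Par pred nat "trm list"
  | Eq ty trm trm
  | Atm pred "trm list"
  | Bot | Top
  | Conj fm fm | Disj fm fm | Imp fm fm
  | All ty fm | Ex ty fm
  | PV "trm list"

fun substf :: "fm \<Rightarrow> nat \<Rightarrow> trm \<Rightarrow> fm" where
  "substf (Par p i ts) k u = Par p i (map (\<lambda>t. substt t k u) ts)"
| "substf (Eq T s t) k u = Eq T (substt s k u) (substt t k u)"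
| "substf (Atm p ts) k u = Atm p (map (\<lambda>t. substt t k u) ts)"
| "substf Bot k u = Bot"
| "substf Top k u = Top"
| "substf (Conj A B) k u = Conj (substf A k u) (substf B k u)"
| "substf (Disj A B) k u = Disj (substf A k u) (substf B k u)"
| "substf (Imp A B) k u = Imp (substf A k u) (substf B k u)"
| "substf (All T A) k u = All T (substf A (Suc k) (lift 0 u))"
| "substf (Ex T A) k u = Ex T (substf A (Suc k) (lift 0 u))"
| "substf (PV ts) k u = PV (map (\<lambda>t. substt t k u) ts)"

text \<open>instf F [t1,...,tn]: F is the body of a lambda abstraction over x1..xn
  (xn is bound index 0); returns the beta-reduct (up to term normalisation).\<close>
fun instf :: "fm \<Rightarrow> trm list \<Rightarrow> fm" where
  "instf F [] = F"
| "instf F (t # ts) = instf (substf F (length ts) (liftn (length ts) t)) ts"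

fun replPV :: "(trm list \<Rightarrow> fm) \<Rightarrow> fm \<Rightarrow> fm" where
  "replPV S (PV ts) = S ts"
| "replPV S (Conj A B) = Conj (replPV S A) (replPV S B)"
| "replPV S (Disj A B) = Disj (replPV S A) (replPV S B)"
| "replPV S (Imp A B) = Imp (replPV S A) (replPV S B)"
| "replPV S (All T A) = All T (replPV S A)"
| "replPV S (Ex T A) = Ex T (replPV S A)"
| "replPV S F = F"

fun esubf :: "(nat \<Rightarrow> ty \<Rightarrow> trm) \<Rightarrow> fm \<Rightarrow> fm" where
  "esubf \<rho> (Par p i ts) = Par p i (map (esub \<rho>) ts)"
| "esubf \<rho> (Eq T s t) = Eq T (esub \<rho> s) (esub \<rho> t)"
| "esubf \<rho> (Atm p ts) = Atm p (map (esub \<rho>) ts)"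
| "esubf \<rho> Bot = Bot"
| "esubf \<rho> Top = Top"
| "esubf \<rho> (Conj A B) = Conj (esubf \<rho> A) (esubf \<rho> B)"
| "esubf \<rho> (Disj A B) = Disj (esubf \<rho> A) (esubf \<rho> B)"
| "esubf \<rho> (Imp A B) = Imp (esubf \<rho> A) (esubf \<rho> B)"
| "esubf \<rho> (All T A) = All T (esubf \<rho> A)"
| "esubf \<rho> (Ex T A) = Ex T (esubf \<rho> A)"
| "esubf \<rho> (PV ts) = PV (map (esub \<rho>) ts)"

fun fvf :: "fm \<Rightarrow> (nat \<times> ty) set" where
  "fvf (Par p i ts) = \<Union>(fvt ` set ts)"
| "fvf (Eq T s t) = fvt s \<union> fvt t"
| "fvf (Atm p ts) = \<Union>(fvt ` set ts)"
| "fvf Bot = {}"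
| "fvf Top = {}"
| "fvf (Conj A B) = fvf A \<union> fvf B"
| "fvf (Disj A B) = fvf A \<union> fvf B"
| "fvf (Imp A B) = fvf A \<union> fvf B"
| "fvf (All T A) = fvf A"
| "fvf (Ex T A) = fvf A"
| "fvf (PV ts) = \<Union>(fvt ` set ts)"

fun parsf :: "fm \<Rightarrow> (pred \<times> nat) set" where
  "parsf (Par p i ts) = {(p, i)}"
| "parsf (Conj A B) = parsf A \<union> parsf B"
| "parsf (Disj A B) = parsf A \<union> parsf B"
| "parsf (Imp A B) = parsf A \<union> parsf B"
| "parsf (All T A) = parsf A"
| "parsf (Ex T A) = parsf A"
| "parsf _ = {}"

fun predsf :: "fm \<Rightarrow> pred set" where
  "predsf (Atm p ts) = {p}"
| "predsf (Conj A B) = predsf A \<union> predsf B"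
| "predsf (Disj A B) = predsf A \<union> predsf B"
| "predsf (Imp A B) = predsf A \<union> predsf B"
| "predsf (All T A) = predsf A"
| "predsf (Ex T A) = predsf A"
| "predsf _ = {}"

text \<open>Well-formedness: wff P G F, G the types of the bound variables, P the argument
  types of the predicate variable (None: no predicate variable allowed).\<close>
fun wff :: "ty list option \<Rightarrow> ty list \<Rightarrow> fm \<Rightarrow> bool" where
  "wff P G (Par p i ts) = (list_all efo (snd p) \<and> list_all2 (hastype G) ts (snd p))"
| "wff P G (Eq T s t) = (efo T \<and> hastype G s T \<and> hastype G t T)"
| "wff P G (Atm p ts) = (list_all efo (snd p) \<and> list_all2 (hastype G) ts (snd p))"
| "wff P G Bot = True"
| "wff P G Top = True"
| "wff P G (Conj A B) = (wff P G A \<and> wff P G B)"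
| "wff P G (Disj A B) = (wff P G A \<and> wff P G B)"
| "wff P G (Imp A B) = (wff P G A \<and> wff P G B)"
| "wff P G (All T A) = (efo T \<and> wff P (T # G) A)"
| "wff P G (Ex T A) = (efo T \<and> wff P (T # G) A)"
| "wff P G (PV ts) = (case P of None \<Rightarrow> False | Some Ts \<Rightarrow> list_all2 (hastype G) ts Ts)"

text \<open>formulae identified up to beta-eta conversion of their terms
  (formulae of the paper are beta-eta-long normal forms)\<close>
primrec feq :: "fm \<Rightarrow> fm \<Rightarrow> bool" where
  "feq (Par p i ts) G = (case G of Par q j us \<Rightarrow> p = q \<and> i = j \<and> list_all2 conv ts us | _ \<Rightarrow> False)"
| "feq (Eq T s t) G = (case G of Eq U s' t' \<Rightarrow> T = U \<and> conv s s' \<and> conv t t' | _ \<Rightarrow> False)"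
| "feq (Atm p ts) G = (case G of Atm q us \<Rightarrow> p = q \<and> list_all2 conv ts us | _ \<Rightarrow> False)"
| "feq Bot G = (G = Bot)"
| "feq Top G = (G = Top)"
| "feq (Conj A B) G = (case G of Conj A' B' \<Rightarrow> feq A A' \<and> feq B B' | _ \<Rightarrow> False)"
| "feq (Disj A B) G = (case G of Disj A' B' \<Rightarrow> feq A A' \<and> feq B B' | _ \<Rightarrow> False)"
| "feq (Imp A B) G = (case G of Imp A' B' \<Rightarrow> feq A A' \<and> feq B B' | _ \<Rightarrow> False)"
| "feq (All T A) G = (case G of All U A' \<Rightarrow> T = U \<and> feq A A' | _ \<Rightarrow> False)"
| "feq (Ex T A) G = (case G of Ex U A' \<Rightarrow> T = U \<and> feq A A' | _ \<Rightarrow> False)"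
| "feq (PV ts) G = (case G of PV us \<Rightarrow> list_all2 conv ts us | _ \<Rightarrow> False)"

datatype kind = Mu | Nu

text \<open>A definition maps a predicate p (of argument types Ts) to its unique clause,
  given by its kind and the body B (a formula over the argument variables x1..xn,
  with xn bound index 0, and the predicate variable PV standing for the bound p).\<close>
type_synonym defn = "pred \<Rightarrow> (kind \<times> fm) option"

definition wf_defn :: "defn \<Rightarrow> bool" where
  "wf_defn D \<longleftrightarrow>
     finite (dom D) \<and>
     acyclic {(p, q). \<exists>k b. D p = Some (k, b) \<and> q \<in> predsf b} \<and>
     (\<forall>p k b. D p = Some (k, b) \<longrightarrow>
        list_all efo (snd p) \<and> wff (Some (snd p)) (rev (snd p)) b \<and>
        parsf b = {} \<and> fvf b = {})"

text \<open>An invariant S for predicate p: a closed term of p's type, i.e. lambda x1..xn. g\<close>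
definition wf_inv :: "pred \<Rightarrow> fm \<Rightarrow> bool" where
  "wf_inv p g \<longleftrightarrow> wff None (rev (snd p)) g \<and> fvf g = {}"

definition unfold :: "fm \<Rightarrow> (trm list \<Rightarrow> fm) \<Rightarrow> trm list \<Rightarrow> fm" where
  "unfold b S ts = instf (replPV S b) ts"

definition wfseq :: "fm multiset \<Rightarrow> fm \<Rightarrow> bool" where
  "wfseq G C \<longleftrightarrow> (\<forall>F\<in>#G. wff None [] F) \<and> wff None [] C"

definition fvs :: "fm multiset \<Rightarrow> (nat \<times> ty) set" where
  "fvs G = \<Union>(fvf ` set_mset G)"

definition pars :: "fm multiset \<Rightarrow> (pred \<times> nat) set" where
  "pars G = \<Union>(parsf ` set_mset G)"

definition eigvars :: "nat list \<Rightarrow> ty list \<Rightarrow> trm list" where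
  "eigvars ys Ts = map2 Fv ys Ts"

inductive deriv :: "defn \<Rightarrow> fm multiset \<Rightarrow> fm \<Rightarrow> bool" for D where
  conversion: "deriv D G C \<Longrightarrow> rel_mset feq G G' \<Longrightarrow> feq C C' \<Longrightarrow> wfseq G' C'
     \<Longrightarrow> deriv D G' C'"
| init: "wfseq {#C#} C \<Longrightarrow> deriv D {#C#} C"
| contrL: "deriv D (G + {#B, B#}) C \<Longrightarrow> deriv D (G + {#B#}) C"
| weakL: "deriv D G C \<Longrightarrow> wfseq (G + {#B#}) C \<Longrightarrow> deriv D (G + {#B#}) C"
| mc: "xs \<noteq> [] \<Longrightarrow> (\<forall>x\<in>set xs. deriv D (fst x) (snd x))
     \<Longrightarrow> deriv D (mset (map snd xs) + G) C
     \<Longrightarrow> deriv D (sum_list (map fst xs) + G) C"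
| botL: "wfseq (G + {#Bot#}) C \<Longrightarrow> deriv D (G + {#Bot#}) C"
| topR: "wfseq G Top \<Longrightarrow> deriv D G Top"
| conjL1: "deriv D (G + {#A#}) C \<Longrightarrow> wfseq (G + {#Conj A B#}) C \<Longrightarrow> deriv D (G + {#Conj A B#}) C"
| conjL2: "deriv D (G + {#B#}) C \<Longrightarrow> wfseq (G + {#Conj A B#}) C \<Longrightarrow> deriv D (G + {#Conj A B#}) C"
| conjR: "deriv D G A \<Longrightarrow> deriv D G B \<Longrightarrow> deriv D G (Conj A B)"
| disjL: "deriv D (G + {#A#}) C \<Longrightarrow> deriv D (G + {#B#}) C \<Longrightarrow> deriv D (G + {#Disj A B#}) C"
| disjR1: "deriv D G A \<Longrightarrow> wfseq G (Disj A B) \<Longrightarrow> deriv D G (Disj A B)"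
| disjR2: "deriv D G B \<Longrightarrow> wfseq G (Disj A B) \<Longrightarrow> deriv D G (Disj A B)"
| impL: "deriv D G A \<Longrightarrow> deriv D (G + {#B#}) C \<Longrightarrow> deriv D (G + {#Imp A B#}) C"
| impR: "deriv D (G + {#A#}) B \<Longrightarrow> deriv D G (Imp A B)"
| allL: "deriv D (G + {#substf A 0 t#}) C \<Longrightarrow> hastype [] t T \<Longrightarrow> wfseq (G + {#All T A#}) C
     \<Longrightarrow> deriv D (G + {#All T A#}) C"
| allR: "deriv D G (substf A 0 (Fv y T)) \<Longrightarrow> (y, T) \<notin> fvs G \<union> fvf A \<Longrightarrow> wfseq G (All T A)
     \<Longrightarrow> deriv D G (All T A)"
| exL: "deriv D (G + {#substf A 0 (Fv y T)#}) C \<Longrightarrow> (y, T) \<notin> fvs G \<union> fvf A \<union> fvf C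
     \<Longrightarrow> wfseq (G + {#Ex T A#}) C \<Longrightarrow> deriv D (G + {#Ex T A#}) C"
| exR: "deriv D G (substf A 0 t) \<Longrightarrow> hastype [] t T \<Longrightarrow> wfseq G (Ex T A) \<Longrightarrow> deriv D G (Ex T A)"
| eqR: "wfseq G (Eq T t t) \<Longrightarrow> deriv D G (Eq T t t)"
| eqL: "(\<forall>\<rho>. wf_esub \<rho> \<longrightarrow> conv (esub \<rho> s) (esub \<rho> t) \<longrightarrow>
          deriv D (image_mset (esubf \<rho>) G) (esubf \<rho> C))
     \<Longrightarrow> wfseq (G + {#Eq T s t#}) C \<Longrightarrow> deriv D (G + {#Eq T s t#}) C"
| IL: "D p = Some (Mu, b) \<Longrightarrow> wf_inv p S \<Longrightarrow> distinct ys \<Longrightarrow> length ys = length (snd p)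
     \<Longrightarrow> deriv D {# unfold b (instf S) (eigvars ys (snd p)) #} (instf S (eigvars ys (snd p)))
     \<Longrightarrow> deriv D (G + {#instf S ts#}) C
     \<Longrightarrow> wfseq (G + {#Atm p ts#}) C
     \<Longrightarrow> deriv D (G + {#Atm p ts#}) C"
| IR: "D p = Some (Mu, b) \<Longrightarrow> (p, i) \<notin> pars G
     \<Longrightarrow> deriv D G (unfold b (Par p i) ts) \<Longrightarrow> wfseq G (Atm p ts)
     \<Longrightarrow> deriv D G (Atm p ts)"
| IRp: "D p = Some (Mu, b)
     \<Longrightarrow> deriv D G (unfold b (Par p i) ts) \<Longrightarrow> wfseq G (Par p i ts)
     \<Longrightarrow> deriv D G (Par p i ts)"
| CIL: "D p = Some (Nu, b) \<Longrightarrow> (p, i) \<notin> pars G \<union> parsf C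
     \<Longrightarrow> deriv D (G + {#unfold b (Par p i) ts#}) C \<Longrightarrow> wfseq (G + {#Atm p ts#}) C
     \<Longrightarrow> deriv D (G + {#Atm p ts#}) C"
| CILp: "D p = Some (Nu, b)
     \<Longrightarrow> deriv D (G + {#unfold b (Par p i) ts#}) C \<Longrightarrow> wfseq (G + {#Par p i ts#}) C
     \<Longrightarrow> deriv D (G + {#Par p i ts#}) C"
| CIR: "D p = Some (Nu, b) \<Longrightarrow> wf_inv p S \<Longrightarrow> distinct ys \<Longrightarrow> length ys = length (snd p)
     \<Longrightarrow> deriv D G (instf S ts)
     \<Longrightarrow> deriv D {#instf S (eigvars ys (snd p))#} (unfold b (instf S) (eigvars ys (snd p)))
     \<Longrightarrow> wfseq G (Atm p ts)
     \<Longrightarrow> deriv D G (Atm p ts)"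

end

theory Submission
  imports Defs
begin

text \<open>
  Soundness with respect to a term model, from which consistency is immediate.
  Formulae are evaluated at ground instances: eigenvariables and the variables bound by
  quantifiers are replaced by closed terms without eigenvariables, equality is
  \<open>\<beta>\<eta>\<close>-convertibility, and a defined predicate is interpreted by recursion along the
  (acyclic, finite) dependency order of the definition: an inductive predicate as the
  intersection of all convertibility-invariant pre-fixed points of its clause, a co-inductive
  one as the union of all such post-fixed points.  A parameter \<open>X\<^sup>p\<close> may be interpreted by
  any such pre-fixed (resp.\ post-fixed) point, which makes the rules introducing fresh
  parameters sound.  Every derivable sequent is then valid, whereas \<open>C\<close> and \<open>C \<supset> \<bottom>\<close>
  cannot both be true in the same model.
\<close>

lemma rel_mset_ex_right: "rel_mset R A B \<Longrightarrow> a \<in># A \<Longrightarrow> \<exists>b\<in>#B. R a b"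
  by (induction rule: rel_mset_induct) auto

lemma mem_sum_list_map_fst: "x \<in> set xs \<Longrightarrow> F \<in># fst x \<Longrightarrow> F \<in># sum_list (map fst xs)"
  by (induction xs) auto

fun inst :: "(nat \<Rightarrow> ty \<Rightarrow> trm) \<Rightarrow> (nat \<Rightarrow> trm) \<Rightarrow> nat \<Rightarrow> trm \<Rightarrow> trm" where
  "inst v e k (Bv i) = (if i < k then Bv i else e (i - k))"
| "inst v e k (Fv n T) = v n T"
| "inst v e k (Cn n T) = Cn n T"
| "inst v e k (Lam T t) = Lam T (inst v e (Suc k) t)"
| "inst v e k (App s t) = App (inst v e k s) (inst v e k t)"

fun lift_by :: "nat \<Rightarrow> nat \<Rightarrow> trm \<Rightarrow> trm" where
  "lift_by n k (Bv i) = (if i < k then Bv i else Bv (i + n))"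
| "lift_by n k (Fv m T) = Fv m T"
| "lift_by n k (Cn m T) = Cn m T"
| "lift_by n k (Lam T t) = Lam T (lift_by n (Suc k) t)"
| "lift_by n k (App s t) = App (lift_by n k s) (lift_by n k t)"

fun bvars_lt :: "trm \<Rightarrow> nat \<Rightarrow> bool" where
  "bvars_lt (Bv i) n = (i < n)"
| "bvars_lt (Fv m T) n = True"
| "bvars_lt (Cn m T) n = True"
| "bvars_lt (Lam T t) n = bvars_lt t (Suc n)"
| "bvars_lt (App s t) n = (bvars_lt s n \<and> bvars_lt t n)"

definition env_ins :: "nat \<Rightarrow> trm \<Rightarrow> (nat \<Rightarrow> trm) \<Rightarrow> nat \<Rightarrow> trm" where
  "env_ins k c e = (\<lambda>i. if i < k then e i else if i = k then c else e (i - 1))"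

definition env_app :: "trm list \<Rightarrow> (nat \<Rightarrow> trm) \<Rightarrow> nat \<Rightarrow> trm" where
  "env_app L e = (\<lambda>i. if i < length L then L ! i else e (i - length L))"

definition env_cons :: "trm \<Rightarrow> (nat \<Rightarrow> trm) \<Rightarrow> nat \<Rightarrow> trm" where
  "env_cons u e = (\<lambda>i. case i of 0 \<Rightarrow> u | Suc j \<Rightarrow> e j)"

definition closed_env :: "(nat \<Rightarrow> trm) \<Rightarrow> bool" where
  "closed_env e \<longleftrightarrow> (\<forall>i. bvars_lt (e i) 0)"

definition closed_val :: "(nat \<Rightarrow> ty \<Rightarrow> trm) \<Rightarrow> bool" where
  "closed_val v \<longleftrightarrow> (\<forall>n T. bvars_lt (v n T) 0)"

lemma lift_lift_by: "lift k (lift_by n k t) = lift_by (Suc n) k t"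
  by (induction t arbitrary: k) auto

lemma lift_by_0: "lift_by 0 k t = t"
  by (induction t arbitrary: k) auto

lemma liftn_eq_lift_by: "liftn n t = lift_by n 0 t"
  by (induction n) (auto simp: lift_by_0 lift_lift_by)

lemma env_ins_0: "env_ins 0 c e = env_cons c e"
  by (auto simp: env_ins_def env_cons_def fun_eq_iff split: nat.splits)

lemma env_ins_Suc_env_cons: "env_ins (Suc k) c (env_cons u e) = env_cons u (env_ins k c e)"
  by (auto simp: env_ins_def env_cons_def fun_eq_iff split: nat.splits)

lemma env_ins_length_env_app: "env_ins (length L) c (env_app L e) = env_app (L @ [c]) e"
  by (auto simp: env_ins_def env_app_def fun_eq_iff nth_append)

lemma env_cons_shift: "(\<lambda>j. env_cons u e (j + Suc k)) = (\<lambda>j. e (j + k))"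
  by (auto simp: env_cons_def)

lemma env_cons_shift_Suc: "(\<lambda>j. env_cons u e (Suc (j + k))) = (\<lambda>j. e (j + k))"
  by (auto simp: env_cons_def)

lemma env_app_shift: "(\<lambda>j. env_app L e (j + length L)) = e"
  by (auto simp: env_app_def)

lemma bvars_lt_mono: "bvars_lt t n \<Longrightarrow> n \<le> m \<Longrightarrow> bvars_lt t m"
  by (induction t arbitrary: n m) auto

lemma lift_bvars_lt: "bvars_lt t n \<Longrightarrow> n \<le> k \<Longrightarrow> lift k t = t"
  by (induction t arbitrary: n k) auto

lemma substt_bvars_lt: "bvars_lt t n \<Longrightarrow> n \<le> k \<Longrightarrow> substt t k u = t"
  by (induction t arbitrary: n k u) auto

lemma hastype_bvars_lt: "hastype G t T \<Longrightarrow> bvars_lt t (length G)"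
  by (induction rule: hastype.induct) auto

lemma hastype_append: "hastype G t T \<Longrightarrow> hastype (G @ H) t T"
proof (induction rule: hastype.induct)
  case (1 i G)
  then show ?case using hastype.intros(1)[of i "G @ H"] by (simp add: nth_append)
qed (auto intro: hastype.intros)

lemma inst_bvars_lt: "bvars_lt t k \<Longrightarrow> inst v e k t = esub v t"
  by (induction t arbitrary: k) auto

lemma inst_closed: "hastype [] t T \<Longrightarrow> inst v e 0 t = esub v t"
  using hastype_bvars_lt[of "[]" t T] inst_bvars_lt by simp

lemma inst_lift_by: "inst v e (m + c) (lift_by (m + k) c t) = inst v (\<lambda>j. e (j + k)) c t"
proof (induction t arbitrary: c)
  case (Lam T t) then show ?case using Lam[of "Suc c"] by simp
qed auto

lemma inst_substt_lift_by:
  "inst v e m (substt s (m + k) (lift_by (m + k) 0 t))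
     = inst v (env_ins k (inst v (\<lambda>j. e (j + k)) 0 t) e) m s"
proof (induction s arbitrary: m)
  case (Bv i)
  show ?case using inst_lift_by[of v e m 0 k t] by (auto simp: env_ins_def)
next
  case (Lam T s)
  then show ?case using Lam[of "Suc m"] by (simp add: lift_lift_by)
qed auto

lemma inst_lift:
  "closed_env e \<Longrightarrow> closed_val v \<Longrightarrow> j \<le> k \<Longrightarrow> inst v e (Suc k) (lift j s) = lift j (inst v e k s)"
proof (induction s arbitrary: j k)
  case (Bv i) then show ?case by (auto simp: closed_env_def intro!: lift_bvars_lt[symmetric, of _ 0])
next
  case (Fv n T) then show ?case by (auto simp: closed_val_def intro!: lift_bvars_lt[symmetric, of _ 0])
qed auto

lemma inst_substt: "closed_env e \<Longrightarrow> closed_val v \<Longrightarrow> j \<le> k \<Longrightarrow>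
   inst v e k (substt s j u) = substt (inst v e (Suc k) s) j (inst v e k u)"
proof (induction s arbitrary: j k u)
  case (Bv i) then show ?case by (auto simp: closed_env_def intro!: substt_bvars_lt[symmetric, of _ 0])
next
  case (Fv n T) then show ?case by (auto simp: closed_val_def intro!: substt_bvars_lt[symmetric, of _ 0])
next
  case (Lam T s) then show ?case by (simp add: inst_lift)
qed auto

lemma conv_inst:
  "conv s s' \<Longrightarrow> closed_env e \<Longrightarrow> closed_val v \<Longrightarrow> conv (inst v e k s) (inst v e k s')"
proof (induction arbitrary: k rule: conv.induct)
  case (conv_beta T s t)
  then show ?case using inst_substt[of e v 0 k s t] by (simp add: conv.conv_beta)
next
  case (conv_eta T s)
  then show ?case using inst_lift[of e v 0 k s] by (simp add: conv.conv_eta)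
qed (auto intro: conv.intros)

lemma conv_inst_env: "(\<forall>i. conv (e i) (e' i)) \<Longrightarrow> conv (inst v e k s) (inst v e' k s)"
  by (induction s arbitrary: k) (auto intro: conv.intros)

lemma inst_esub:
  "\<forall>n T. bvars_lt (\<rho> n T) 0 \<Longrightarrow> inst w e k (esub \<rho> s) = inst (\<lambda>n T. esub w (\<rho> n T)) e k s"
  by (induction s arbitrary: k) (auto intro: inst_bvars_lt bvars_lt_mono)

lemma esub_fvt_empty: "fvt c = {} \<Longrightarrow> esub w c = c"
  by (induction c) auto

lemma fvt_inst_empty:
  "\<forall>i. fvt (e i) = {} \<Longrightarrow> \<forall>n T. fvt (v n T) = {} \<Longrightarrow> fvt (inst v e k s) = {}"
  by (induction s arbitrary: k) auto

lemma hastype_inst: "hastype G' t T \<Longrightarrow> G' = H @ G \<Longrightarrow> (\<forall>i<length G. hastype [] (e i) (G ! i)) \<Longrightarrow>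
   (\<forall>n T. efo T \<longrightarrow> hastype [] (v n T) T) \<Longrightarrow> hastype H (inst v e (length H) t) T"
proof (induction arbitrary: H rule: hastype.induct)
  case (1 i G')
  show ?case
  proof (cases "i < length H")
    case True then show ?thesis using 1 hastype.intros(1)[of i H] by (simp add: nth_append)
  next
    case False then show ?thesis using 1 hastype_append[of "[]" "e (i - length H)" "G ! (i - length H)" H]
      by (simp add: nth_append)
  qed
next
  case (2 T G n) then show ?case using hastype_append[of "[]" "v n T" T H] by simp
next
  case (4 T G t U)
  then show ?case using 4(3)[of "T # H"] by (auto intro: hastype.intros)
qed (auto intro: hastype.intros)

lemma inst_cong_env: "bvars_lt s (k + n) \<Longrightarrow> (\<forall>i<n. e i = e' i) \<Longrightarrow> inst v e k s = inst v e' k s"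
  by (induction s arbitrary: k) auto

lemma inst_cong_val: "(\<forall>(n, T)\<in>fvt s. v n T = v' n T) \<Longrightarrow> inst v e k s = inst v' e k s"
  by (induction s arbitrary: k) auto

lemma map_inst_cong_env: "list_all2 (hastype G) ts Ts \<Longrightarrow> \<forall>i<length G. e i = e' i \<Longrightarrow>
   map (inst v e 0) ts = map (inst v e' 0) ts"
proof (induction rule: list_all2_induct)
  case (Cons x xs y ys)
  have "inst v e 0 x = inst v e' 0 x"
    using inst_cong_env[of x 0 "length G" e e' v] hastype_bvars_lt[OF Cons(1)] Cons.prems by simp
  then show ?case using Cons by simp
qed simp

lemma list_all2_conv_map_inst:
  "list_all2 conv ts us \<Longrightarrow> closed_env e \<Longrightarrow> closed_val v \<Longrightarrow>
   list_all2 conv (map (inst v e 0) ts) (map (inst v e 0) us)"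
  by (induction rule: list_all2_induct) (auto intro: conv_inst)

lemma list_all2_conv_map_inst_env:
  "\<forall>i. conv (e i) (e' i) \<Longrightarrow> list_all2 conv (map (inst v e 0) ts) (map (inst v e' 0) ts)"
  by (induction ts) (auto intro: conv_inst_env)

lemma conv_cong_iff: "conv a a' \<Longrightarrow> conv b b' \<Longrightarrow> conv a b = conv a' b'"
  by (meson conv_sym conv_trans)

lemma conv_env_app: "list_all2 conv as bs \<Longrightarrow> \<forall>i. conv (env_app (rev as) e i) (env_app (rev bs) e i)"
proof
  fix i assume "list_all2 conv as bs"
  then have r: "list_all2 conv (rev as) (rev bs)" by simp
  then have "length (rev as) = length (rev bs)" by (rule list_all2_lengthD)
  then show "conv (env_app (rev as) e i) (env_app (rev bs) e i)"
    using list_all2_nthD[OF r] by (auto simp: env_app_def intro: conv_refl)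
qed

section \<open>Truth in the term model\<close>

type_synonym interp = "pred \<Rightarrow> trm list \<Rightarrow> bool"
type_synonym pinterp = "pred \<times> nat \<Rightarrow> trm list \<Rightarrow> bool"

definition ground :: "trm \<Rightarrow> ty \<Rightarrow> bool" where
  "ground u T \<longleftrightarrow> hastype [] u T \<and> fvt u = {}"

text \<open>\<open>holds I \<pi> X v e F\<close>: predicates are read by \<open>I\<close>, parameters by \<open>\<pi>\<close>, the predicate
  variable of a clause body by \<open>X\<close>, eigenvariables by \<open>v\<close> and loose bound variables by \<open>e\<close>.\<close>
fun holds :: "interp \<Rightarrow> pinterp \<Rightarrow> (trm list \<Rightarrow> bool) \<Rightarrow> (nat \<Rightarrow> ty \<Rightarrow> trm) \<Rightarrow> (nat \<Rightarrow> trm)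
    \<Rightarrow> fm \<Rightarrow> bool" where
  "holds I \<pi> X v e (Par p i ts) = \<pi> (p, i) (map (inst v e 0) ts)"
| "holds I \<pi> X v e (Eq T s t) = conv (inst v e 0 s) (inst v e 0 t)"
| "holds I \<pi> X v e (Atm p ts) = I p (map (inst v e 0) ts)"
| "holds I \<pi> X v e Bot = False"
| "holds I \<pi> X v e Top = True"
| "holds I \<pi> X v e (Conj A B) = (holds I \<pi> X v e A \<and> holds I \<pi> X v e B)"
| "holds I \<pi> X v e (Disj A B) = (holds I \<pi> X v e A \<or> holds I \<pi> X v e B)"
| "holds I \<pi> X v e (Imp A B) = (holds I \<pi> X v e A \<longrightarrow> holds I \<pi> X v e B)"
| "holds I \<pi> X v e (All T A) = (\<forall>u. ground u T \<longrightarrow> holds I \<pi> X v (env_cons u e) A)"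
| "holds I \<pi> X v e (Ex T A) = (\<exists>u. ground u T \<and> holds I \<pi> X v (env_cons u e) A)"
| "holds I \<pi> X v e (PV ts) = X (map (inst v e 0) ts)"

definition conv_inv :: "(trm list \<Rightarrow> bool) \<Rightarrow> bool" where
  "conv_inv X \<longleftrightarrow> (\<forall>as bs. list_all2 conv as bs \<longrightarrow> X as = X bs)"

lemma conv_invD: "conv_inv X \<Longrightarrow> list_all2 conv as bs \<Longrightarrow> X as = X bs"
  by (simp add: conv_inv_def)

lemma closed_env_env_cons: "closed_env e \<Longrightarrow> ground u T \<Longrightarrow> closed_env (env_cons u e)"
  using hastype_bvars_lt[of "[]" u T] by (auto simp: closed_env_def env_cons_def ground_def split: nat.splits)

lemma holds_substf_env_ins:
  "holds I \<pi> X v e (substf F k (lift_by k 0 t)) = holds I \<pi> X v (env_ins k (inst v (\<lambda>j. e (j + k)) 0 t) e) F"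
proof (induction F arbitrary: k e)
  case (All T A) then show ?case by (simp add: lift_lift_by env_ins_Suc_env_cons env_cons_shift env_cons_shift_Suc)
next
  case (Ex T A) then show ?case by (simp add: lift_lift_by env_ins_Suc_env_cons env_cons_shift env_cons_shift_Suc)
qed (use inst_substt_lift_by[where m = 0, simplified] in \<open>simp_all add: comp_def\<close>)

lemma holds_substf_0: "holds I \<pi> X v e (substf F 0 t) = holds I \<pi> X v (env_cons (inst v e 0 t) e) F"
  using holds_substf_env_ins[of I \<pi> X v e F 0 t] by (simp add: lift_by_0 env_ins_0)

lemma holds_instf:
  "holds I \<pi> X v e (instf F ts) = holds I \<pi> X v (env_app (rev (map (inst v e 0) ts)) e) F"
proof (induction ts arbitrary: F)
  case Nil then show ?case by (simp add: env_app_def)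
next
  case (Cons t ts)
  let ?L = "rev (map (inst v e 0) ts)"
  have "holds I \<pi> X v e (instf F (t # ts))
      = holds I \<pi> X v (env_app ?L e) (substf F (length ts) (lift_by (length ts) 0 t))"
    using Cons by (simp add: liftn_eq_lift_by)
  also have "\<dots> = holds I \<pi> X v (env_app (rev (map (inst v e 0) (t # ts))) e) F"
    using holds_substf_env_ins[of I \<pi> X v "env_app ?L e" F "length ts" t]
      env_app_shift[of ?L e] env_ins_length_env_app[of ?L]
    by simp
  finally show ?case .
qed

lemma holds_feq:
  "feq A B \<Longrightarrow> closed_env e \<Longrightarrow> closed_val v \<Longrightarrow>
   \<forall>p. conv_inv (I p) \<Longrightarrow> \<forall>q. conv_inv (\<pi> q) \<Longrightarrow> conv_inv X \<Longrightarrow>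
   holds I \<pi> X v e A = holds I \<pi> X v e B"
proof (induction A arbitrary: B e)
  case (Par p i ts)
  then obtain us where B: "B = Par p i us" "list_all2 conv ts us" by (cases B) auto
  have c: "conv_inv (\<pi> (p, i))" using Par.prems by blast
  show ?case using B(1) conv_invD[OF c list_all2_conv_map_inst[OF B(2) Par.prems(2,3)]] by simp
next
  case (Eq T s t)
  then obtain s' t' where B: "B = Eq T s' t'" "conv s s'" "conv t t'" by (cases B) auto
  show ?case using B(1) conv_cong_iff[OF conv_inst[OF B(2) Eq.prems(2,3)] conv_inst[OF B(3) Eq.prems(2,3)]] by simp
next
  case (Atm p ts)
  then obtain us where B: "B = Atm p us" "list_all2 conv ts us" by (cases B) auto
  have c: "conv_inv (I p)" using Atm.prems by blast
  show ?case using B(1) conv_invD[OF c list_all2_conv_map_inst[OF B(2) Atm.prems(2,3)]] by simp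
next
  case (PV ts)
  then obtain us where B: "B = PV us" "list_all2 conv ts us" by (cases B) auto
  have c: "conv_inv X" using PV.prems by blast
  show ?case using B(1) conv_invD[OF c list_all2_conv_map_inst[OF B(2) PV.prems(2,3)]] by simp
next
  case (Conj A1 A2)
  then obtain B1 B2 where "B = Conj B1 B2" "feq A1 B1" "feq A2 B2" by (cases B) auto
  then show ?case using Conj.IH Conj.prems by simp
next
  case (Disj A1 A2)
  then obtain B1 B2 where "B = Disj B1 B2" "feq A1 B1" "feq A2 B2" by (cases B) auto
  then show ?case using Disj.IH Disj.prems by simp
next
  case (Imp A1 A2)
  then obtain B1 B2 where "B = Imp B1 B2" "feq A1 B1" "feq A2 B2" by (cases B) auto
  then show ?case using Imp.IH Imp.prems by simp
next
  case (All T A)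
  then obtain A' where B: "B = All T A'" "feq A A'" by (cases B) auto
  have "ground u T \<Longrightarrow> holds I \<pi> X v (env_cons u e) A = holds I \<pi> X v (env_cons u e) A'" for u
    using All.IH[OF B(2) closed_env_env_cons[OF All.prems(2)] All.prems(3-6)] by simp
  then show ?case using B by simp
next
  case (Ex T A)
  then obtain A' where B: "B = Ex T A'" "feq A A'" by (cases B) auto
  have "ground u T \<Longrightarrow> holds I \<pi> X v (env_cons u e) A = holds I \<pi> X v (env_cons u e) A'" for u
    using Ex.IH[OF B(2) closed_env_env_cons[OF Ex.prems(2)] Ex.prems(3-6)] by simp
  then show ?case using B by auto
qed auto

lemma holds_conv_env:
  "\<forall>i. conv (e i) (e' i) \<Longrightarrow> \<forall>p. conv_inv (I p) \<Longrightarrow> \<forall>q. conv_inv (\<pi> q) \<Longrightarrow> conv_inv X \<Longrightarrow>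
   holds I \<pi> X v e F = holds I \<pi> X v e' F"
proof (induction F arbitrary: e e')
  case (Eq T s t) then show ?case using conv_cong_iff[OF conv_inst_env[of e e' v 0 s] conv_inst_env[of e e' v 0 t]] by simp
next
  case (All T A)
  have "\<forall>i. conv (env_cons u e i) (env_cons u e' i)" for u
    using All(2) by (auto simp: env_cons_def split: nat.splits intro: conv_refl)
  then have "holds I \<pi> X v (env_cons u e) A = holds I \<pi> X v (env_cons u e') A" for u
    using All.IH All.prems by blast
  then show ?case by simp
next
  case (Ex T A)
  have "\<forall>i. conv (env_cons u e i) (env_cons u e' i)" for u
    using Ex(2) by (auto simp: env_cons_def split: nat.splits intro: conv_refl)
  then have "holds I \<pi> X v (env_cons u e) A = holds I \<pi> X v (env_cons u e') A" for u
    using Ex.IH Ex.prems by blast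
  then show ?case by simp
next
  case (Par p i ts)
  have "conv_inv (\<pi> (p, i))" using Par.prems(3) by blast
  then show ?case using conv_invD[OF _ list_all2_conv_map_inst_env[OF Par.prems(1)], of "\<pi> (p, i)" v ts] by simp
next
  case (Atm p ts)
  have "conv_inv (I p)" using Atm.prems(2) by blast
  then show ?case using conv_invD[OF _ list_all2_conv_map_inst_env[OF Atm.prems(1)], of "I p" v ts] by simp
next
  case (PV ts) then show ?case using conv_invD[OF _ list_all2_conv_map_inst_env[OF PV.prems(1)], of X v ts] by simp
qed auto

lemma holds_cong_val: "\<forall>(n, T)\<in>fvf F. v n T = v' n T \<Longrightarrow> holds I \<pi> X v e F = holds I \<pi> X v' e F"
proof (induction F arbitrary: e)
  case (Par p i ts)
  then have eq: "map (inst v e 0) ts = map (inst v' e 0) ts" by (auto intro!: map_cong inst_cong_val)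
  show ?case unfolding holds.simps eq ..
next
  case (Atm p ts)
  then have eq: "map (inst v e 0) ts = map (inst v' e 0) ts" by (auto intro!: map_cong inst_cong_val)
  show ?case unfolding holds.simps eq ..
next
  case (PV ts)
  then have eq: "map (inst v e 0) ts = map (inst v' e 0) ts" by (auto intro!: map_cong inst_cong_val)
  show ?case unfolding holds.simps eq ..
next
  case (Eq T s t)
  then show ?case using inst_cong_val[of s v v' e 0] inst_cong_val[of t v v' e 0] by simp
qed simp_all

lemma holds_cong_par: "\<forall>q\<in>parsf F. \<pi> q = \<pi>' q \<Longrightarrow> holds I \<pi> X v e F = holds I \<pi>' X v e F"
  by (induction F arbitrary: e) simp_all

lemma holds_cong_interp: "\<forall>q\<in>predsf F. I q = I' q \<Longrightarrow> holds I \<pi> X v e F = holds I' \<pi> X v e F"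
  by (induction F arbitrary: e) simp_all

lemma holds_cong_env: "wff P G F \<Longrightarrow> \<forall>i<length G. e i = e' i \<Longrightarrow> holds I \<pi> X v e F = holds I \<pi> X v e' F"
proof (induction F arbitrary: G e e')
  case (Par p i ts)
  have eq: "map (inst v e 0) ts = map (inst v e' 0) ts"
    using map_inst_cong_env[of G ts "snd p" e e' v] Par.prems by simp
  show ?case unfolding holds.simps eq ..
next
  case (Atm p ts)
  have eq: "map (inst v e 0) ts = map (inst v e' 0) ts"
    using map_inst_cong_env[of G ts "snd p" e e' v] Atm.prems by simp
  show ?case unfolding holds.simps eq ..
next
  case (PV ts)
  obtain Ts where "list_all2 (hastype G) ts Ts" using PV.prems(1) by (auto split: option.splits)
  then have eq: "map (inst v e 0) ts = map (inst v e' 0) ts"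
    using map_inst_cong_env[of G ts Ts e e' v] PV.prems(2) by simp
  show ?case unfolding holds.simps eq ..
next
  case (Eq T s t)
  then show ?case using inst_cong_env[of s 0 "length G" e e' v] inst_cong_env[of t 0 "length G" e e' v]
    hastype_bvars_lt[of G s T] hastype_bvars_lt[of G t T] by simp
next
  case (Conj A B) then show ?case by simp blast
next
  case (Disj A B) then show ?case by simp blast
next
  case (Imp A B) then show ?case by simp blast
next
  case (All T A)
  have "\<forall>i<length (T#G). env_cons u e i = env_cons u e' i" for u
    using All.prems(2) by (auto simp: env_cons_def split: nat.splits)
  then have "holds I \<pi> X v (env_cons u e) A = holds I \<pi> X v (env_cons u e') A" for u
    using All.IH[of "T#G"] All.prems(1) by simp
  then show ?case by simp
next
  case (Ex T A)
  have "\<forall>i<length (T#G). env_cons u e i = env_cons u e' i" for u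
    using Ex.prems(2) by (auto simp: env_cons_def split: nat.splits)
  then have "holds I \<pi> X v (env_cons u e) A = holds I \<pi> X v (env_cons u e') A" for u
    using Ex.IH[of "T#G"] Ex.prems(1) by simp
  then show ?case by simp
qed simp_all

lemma holds_esubf:
  "\<forall>n T. bvars_lt (\<rho> n T) 0 \<Longrightarrow> holds I \<pi> X w e (esubf \<rho> F) = holds I \<pi> X (\<lambda>n T. esub w (\<rho> n T)) e F"
  by (induction F arbitrary: e) (simp_all add: inst_esub comp_def)

lemma holds_replPV_Par: "holds I \<pi> X v e (replPV (Par p i) F) = holds I \<pi> (\<pi> (p, i)) v e F"
  by (induction F arbitrary: e) simp_all

lemma holds_replPV_instf:
  "wff (Some Ts) G F \<Longrightarrow> wff None (rev Ts) S \<Longrightarrow>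
   holds I \<pi> Z v e (replPV (instf S) F) = holds I \<pi> (\<lambda>as. holds I \<pi> Z v (env_app (rev as) e0) S) v e F"
proof (induction F arbitrary: G e)
  case (PV ts)
  then have "length ts = length Ts" by (auto dest: list_all2_lengthD)
  then show ?case
    by (simp add: holds_instf) (rule holds_cong_env[OF PV.prems(2)], simp add: env_app_def)
qed (simp_all, blast+)

lemma holds_unfold_Par:
  "holds I \<pi> Z v e (unfold b (Par p i) ts) = holds I \<pi> (\<pi> (p, i)) v (env_app (rev (map (inst v e 0) ts)) e) b"
  by (simp add: unfold_def holds_instf holds_replPV_Par)

section \<open>Interpretation of defined predicates\<close>

text \<open>The formulae of a sequent are closed, so \<open>env0\<close> is never consulted there; neither are
  \<open>val0\<close> and \<open>par0\<close> in clause bodies, which have no eigenvariables or parameters, nor \<open>pv0\<close>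
  outside clause bodies.\<close>
definition env0 :: "nat \<Rightarrow> trm" where "env0 = (\<lambda>_. Cn 0 (Base 0))"
definition val0 :: "nat \<Rightarrow> ty \<Rightarrow> trm" where "val0 = (\<lambda>n T. Cn 0 T)"
definition par0 :: pinterp where "par0 = (\<lambda>_ _. False)"
definition pv0 :: "trm list \<Rightarrow> bool" where "pv0 = (\<lambda>_. False)"

abbreviation body_holds :: "interp \<Rightarrow> fm \<Rightarrow> (trm list \<Rightarrow> bool) \<Rightarrow> trm list \<Rightarrow> bool" where
  "body_holds I b X as \<equiv> holds I par0 X val0 (env_app (rev as) env0) b"

definition prefixed :: "interp \<Rightarrow> pred \<Rightarrow> fm \<Rightarrow> (trm list \<Rightarrow> bool) \<Rightarrow> bool" where
  "prefixed I p b X \<longleftrightarrow> (\<forall>as. list_all2 ground as (snd p) \<longrightarrow> body_holds I b X as \<longrightarrow> X as)"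

definition postfixed :: "interp \<Rightarrow> pred \<Rightarrow> fm \<Rightarrow> (trm list \<Rightarrow> bool) \<Rightarrow> bool" where
  "postfixed I p b X \<longleftrightarrow> (\<forall>as. list_all2 ground as (snd p) \<longrightarrow> X as \<longrightarrow> body_holds I b X as)"

definition interp_step :: "defn \<Rightarrow> interp \<Rightarrow> interp" where
  "interp_step D I p = (case D p of None \<Rightarrow> (\<lambda>_. False)
     | Some (Mu, b) \<Rightarrow> (\<lambda>as. \<forall>X. conv_inv X \<longrightarrow> prefixed I p b X \<longrightarrow> X as)
     | Some (Nu, b) \<Rightarrow> (\<lambda>as. \<exists>X. conv_inv X \<and> postfixed I p b X \<and> X as))"

definition dep_rel :: "defn \<Rightarrow> (pred \<times> pred) set" where
  "dep_rel D = {(q, p). \<exists>k b. D p = Some (k, b) \<and> q \<in> predsf b}"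

definition defn_interp :: "defn \<Rightarrow> interp" where
  "defn_interp D = wfrec (dep_rel D) (interp_step D)"

lemma finite_predsf: "finite (predsf F)"
  by (induction F) simp_all

lemma wf_dep_rel:
  assumes "wf_defn D"
  shows "wf (dep_rel D)"
proof -
  let ?A = "{(p, q). \<exists>k b. D p = Some (k, b) \<and> q \<in> predsf b}"
  have "?A \<subseteq> Sigma (dom D) (\<lambda>p. predsf (snd (the (D p))))" by auto
  moreover have "finite (Sigma (dom D) (\<lambda>p. predsf (snd (the (D p)))))"
    using assms by (intro finite_SigmaI) (auto simp: wf_defn_def finite_predsf)
  ultimately have "finite ?A" by (rule finite_subset)
  moreover have "acyclic ?A" using assms by (simp add: wf_defn_def)
  ultimately have "wf (?A\<inverse>)" by (rule finite_acyclic_wf_converse)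
  moreover have "?A\<inverse> = dep_rel D" by (auto simp: dep_rel_def)
  ultimately show ?thesis by simp
qed

lemma interp_step_cut: "interp_step D (cut I (dep_rel D) p) p = interp_step D I p"
proof -
  have "D p = Some (k, b) \<Longrightarrow> holds (cut I (dep_rel D) p) \<pi> X v e b = holds I \<pi> X v e b" for k b \<pi> X v e
    by (rule holds_cong_interp) (auto simp: cut_apply dep_rel_def)
  then show ?thesis
    by (cases "D p") (auto simp: interp_step_def prefixed_def postfixed_def split: kind.splits)
qed

lemma defn_interp_unfold: "wf_defn D \<Longrightarrow> defn_interp D p = interp_step D (defn_interp D) p"
  unfolding defn_interp_def using wfrec[OF wf_dep_rel, of D "interp_step D" p] interp_step_cut by simp

lemma defn_interp_Mu: "wf_defn D \<Longrightarrow> D p = Some (Mu, b) \<Longrightarrow>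
   defn_interp D p as = (\<forall>X. conv_inv X \<longrightarrow> prefixed (defn_interp D) p b X \<longrightarrow> X as)"
  by (subst defn_interp_unfold) (auto simp: interp_step_def)

lemma defn_interp_Nu: "wf_defn D \<Longrightarrow> D p = Some (Nu, b) \<Longrightarrow>
   defn_interp D p as = (\<exists>X. conv_inv X \<and> postfixed (defn_interp D) p b X \<and> X as)"
  by (subst defn_interp_unfold) (auto simp: interp_step_def)

lemma conv_inv_defn_interp:
  assumes "wf_defn D"
  shows "conv_inv (defn_interp D p)"
proof (cases "D p")
  case None
  then show ?thesis using assms by (subst defn_interp_unfold) (auto simp: interp_step_def conv_inv_def)
next
  case (Some kb)
  then obtain k b where D: "D p = Some (k, b)" by (cases kb) auto
  show ?thesis
  proof (cases k)
    case Mu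
    then show ?thesis unfolding conv_inv_def using defn_interp_Mu[OF assms] D conv_invD by metis
  next
    case Nu
    then show ?thesis unfolding conv_inv_def using defn_interp_Nu[OF assms] D conv_invD by metis
  qed
qed

lemma holds_clause_body:
  assumes "wf_defn D" "D p = Some (k, b)" "length as = length (snd p)"
  shows "holds I \<pi> X v (env_app (rev as) e) b = body_holds I b X as"
proof -
  have b: "wff (Some (snd p)) (rev (snd p)) b" "parsf b = {}" "fvf b = {}"
    using assms(1,2) unfolding wf_defn_def by blast+
  have "holds I \<pi> X v (env_app (rev as) e) b = holds I par0 X v (env_app (rev as) e) b"
    using b by (intro holds_cong_par) simp
  also have "\<dots> = holds I par0 X val0 (env_app (rev as) e) b"
    using b by (intro holds_cong_val) simp
  also have "\<dots> = body_holds I b X as"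
    using b(1) by (rule holds_cong_env) (simp add: env_app_def assms(3))
  finally show ?thesis .
qed

definition ground_val :: "(nat \<Rightarrow> ty \<Rightarrow> trm) \<Rightarrow> bool" where
  "ground_val v \<longleftrightarrow> (\<forall>n T. bvars_lt (v n T) 0 \<and> fvt (v n T) = {}) \<and> (\<forall>n T. efo T \<longrightarrow> hastype [] (v n T) T)"

definition admissible :: "defn \<Rightarrow> pinterp \<Rightarrow> bool" where
  "admissible D \<pi> \<longleftrightarrow> (\<forall>p i. conv_inv (\<pi> (p, i))
      \<and> (\<forall>b. D p = Some (Mu, b) \<longrightarrow> prefixed (defn_interp D) p b (\<pi> (p, i)))
      \<and> (\<forall>b. D p = Some (Nu, b) \<longrightarrow> postfixed (defn_interp D) p b (\<pi> (p, i))))"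

abbreviation sat :: "defn \<Rightarrow> pinterp \<Rightarrow> (nat \<Rightarrow> ty \<Rightarrow> trm) \<Rightarrow> fm \<Rightarrow> bool" where
  "sat D \<pi> v \<equiv> holds (defn_interp D) \<pi> pv0 v env0"

definition valid :: "defn \<Rightarrow> fm multiset \<Rightarrow> fm \<Rightarrow> bool" where
  "valid D G C \<longleftrightarrow>
     (\<forall>\<pi> v. admissible D \<pi> \<longrightarrow> ground_val v \<longrightarrow> (\<forall>F\<in>#G. sat D \<pi> v F) \<longrightarrow> sat D \<pi> v C)"

lemma validI:
  "(\<And>\<pi> v. admissible D \<pi> \<Longrightarrow> ground_val v \<Longrightarrow> \<forall>F\<in>#G. sat D \<pi> v F \<Longrightarrow> sat D \<pi> v C) \<Longrightarrow> valid D G C"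
  by (simp add: valid_def)

lemma validD:
  "valid D G C \<Longrightarrow> admissible D \<pi> \<Longrightarrow> ground_val v \<Longrightarrow> \<forall>F\<in>#G. sat D \<pi> v F \<Longrightarrow> sat D \<pi> v C"
  by (simp add: valid_def)

lemma admissible_conv_inv: "admissible D \<pi> \<Longrightarrow> conv_inv (\<pi> q)"
  by (cases q) (auto simp: admissible_def)

lemma admissible_prefixed: "admissible D \<pi> \<Longrightarrow> D p = Some (Mu, b) \<Longrightarrow> prefixed (defn_interp D) p b (\<pi> (p, i))"
  unfolding admissible_def by blast

lemma admissible_postfixed: "admissible D \<pi> \<Longrightarrow> D p = Some (Nu, b) \<Longrightarrow> postfixed (defn_interp D) p b (\<pi> (p, i))"
  unfolding admissible_def by blast

lemma admissible_fun_upd: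
  "admissible D \<pi> \<Longrightarrow> conv_inv X \<Longrightarrow> (\<forall>b. D p = Some (Mu, b) \<longrightarrow> prefixed (defn_interp D) p b X) \<Longrightarrow>
   (\<forall>b. D p = Some (Nu, b) \<longrightarrow> postfixed (defn_interp D) p b X) \<Longrightarrow> admissible D (\<pi>((p, i) := X))"
  unfolding admissible_def by auto

lemma closed_env_env0: "closed_env env0"
  by (simp add: closed_env_def env0_def)

lemma ground_val_closed_val: "ground_val v \<Longrightarrow> closed_val v"
  by (simp add: ground_val_def closed_val_def)

lemma conv_inv_pv0: "conv_inv pv0"
  by (simp add: conv_inv_def pv0_def)

lemma ground_bvars_lt: "ground u T \<Longrightarrow> bvars_lt u 0"
  using hastype_bvars_lt[of "[]" u T] by (simp add: ground_def)

lemma ground_inst: "hastype [] t T \<Longrightarrow> ground_val v \<Longrightarrow> ground (inst v env0 0 t) T"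
  unfolding ground_def
  using hastype_inst[of "[]" t T "[]" "[]" env0 v] fvt_inst_empty[of env0 v 0 t]
  by (auto simp: ground_val_def env0_def)

lemma list_all2_ground_map_inst:
  "list_all2 (hastype []) ts Ts \<Longrightarrow> ground_val v \<Longrightarrow> list_all2 ground (map (inst v env0 0) ts) Ts"
  by (induction rule: list_all2_induct) (auto intro: ground_inst)

lemma ground_val_fun_upd: "ground_val v \<Longrightarrow> ground u T \<Longrightarrow> ground_val (\<lambda>n S. if n = y \<and> S = T then u else v n S)"
  using ground_bvars_lt by (auto simp: ground_val_def ground_def)

definition val_upd :: "(nat \<Rightarrow> ty \<Rightarrow> trm) \<Rightarrow> nat list \<Rightarrow> ty list \<Rightarrow> trm list \<Rightarrow> nat \<Rightarrow> ty \<Rightarrow> trm" where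
  "val_upd v ys Ts as = (\<lambda>n T. case map_of (zip (zip ys Ts) as) (n, T) of None \<Rightarrow> v n T | Some a \<Rightarrow> a)"

lemma map_inst_val_upd_eigvars:
  assumes "distinct ys" "length ys = length Ts" "length as = length Ts"
  shows "map (inst (val_upd v ys Ts as) e 0) (eigvars ys Ts) = as"
proof (rule nth_equalityI)
  show "length (map (inst (val_upd v ys Ts as) e 0) (eigvars ys Ts)) = length as"
    using assms by (simp add: eigvars_def)
  fix i assume "i < length (map (inst (val_upd v ys Ts as) e 0) (eigvars ys Ts))"
  then have i: "i < length Ts" using assms by (simp add: eigvars_def)
  have "distinct (zip ys Ts)" using assms(1) by (rule distinct_zipI1)
  then have "map_of (zip (zip ys Ts) as) (zip ys Ts ! i) = Some (as ! i)"
    by (intro map_of_zip_nth) (use assms i in auto)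
  then show "map (inst (val_upd v ys Ts as) e 0) (eigvars ys Ts) ! i = as ! i"
    using assms i by (simp add: eigvars_def val_upd_def)
qed

lemma ground_val_val_upd:
  assumes "ground_val v" "list_all2 ground as Ts"
  shows "ground_val (val_upd v ys Ts as)"
proof -
  have ground_entry: "ground a T" if "map_of (zip (zip ys Ts) as) (n, T) = Some a" for n T a
  proof -
    from that have "((n, T), a) \<in> set (zip (zip ys Ts) as)" by (rule map_of_SomeD)
    then obtain i where "i < length (zip (zip ys Ts) as)" "zip (zip ys Ts) as ! i = ((n, T), a)"
      by (auto simp: in_set_conv_nth)
    then have "Ts ! i = T" "as ! i = a" "i < length Ts" by auto
    then show "ground a T" using assms(2) by (auto dest: list_all2_nthD2)
  qed
  show ?thesis using assms(1) ground_entry ground_bvars_lt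
    by (auto simp: ground_val_def val_upd_def ground_def split: option.splits) blast+
qed

abbreviation inv_interp :: "interp \<Rightarrow> pinterp \<Rightarrow> (nat \<Rightarrow> ty \<Rightarrow> trm) \<Rightarrow> fm \<Rightarrow> trm list \<Rightarrow> bool" where
  "inv_interp I \<pi> v S \<equiv> (\<lambda>as. holds I \<pi> pv0 v (env_app (rev as) env0) S)"

lemma conv_inv_inv_interp: "wf_defn D \<Longrightarrow> admissible D \<pi> \<Longrightarrow> conv_inv (inv_interp (defn_interp D) \<pi> v S)"
  unfolding conv_inv_def
  using holds_conv_env[OF conv_env_app] conv_inv_defn_interp admissible_conv_inv
  by (metis conv_inv_pv0)

lemma holds_instf_eigvars:
  assumes "wf_inv p S" "distinct ys" "length ys = length (snd p)" "length as = length (snd p)"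
  shows "holds I \<pi> pv0 (val_upd v ys (snd p) as) env0 (instf S (eigvars ys (snd p))) = inv_interp I \<pi> v S as"
proof -
  have "fvf S = {}" using assms(1) by (simp add: wf_inv_def)
  then show ?thesis
    using map_inst_val_upd_eigvars[OF assms(2-4)] holds_cong_val[of S "val_upd v ys (snd p) as" v]
    by (simp add: holds_instf)
qed

lemma holds_unfold_instf_eigvars:
  assumes "wf_defn D" "D p = Some (k, b)" "wf_inv p S" "distinct ys"
    "length ys = length (snd p)" "length as = length (snd p)"
  shows "holds I \<pi> pv0 (val_upd v ys (snd p) as) env0 (unfold b (instf S) (eigvars ys (snd p)))
       = body_holds I b (inv_interp I \<pi> v S) as"
proof -
  let ?v = "val_upd v ys (snd p) as"
  have S: "wff None (rev (snd p)) S" "fvf S = {}" using assms(3) by (auto simp: wf_inv_def)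
  have b: "wff (Some (snd p)) (rev (snd p)) b" using assms(1,2) unfolding wf_defn_def by blast
  have inv_upd: "inv_interp I \<pi> ?v S = inv_interp I \<pi> v S"
    using S(2) by (intro ext holds_cong_val) simp
  have "holds I \<pi> pv0 ?v env0 (unfold b (instf S) (eigvars ys (snd p)))
      = holds I \<pi> pv0 ?v (env_app (rev as) env0) (replPV (instf S) b)"
    by (simp add: unfold_def holds_instf map_inst_val_upd_eigvars[OF assms(4-6)])
  also have "\<dots> = holds I \<pi> (inv_interp I \<pi> ?v S) ?v (env_app (rev as) env0) b"
    by (rule holds_replPV_instf[OF b S(1)])
  also have "\<dots> = body_holds I b (inv_interp I \<pi> v S) as"
    unfolding inv_upd by (rule holds_clause_body[OF assms(1,2,6)])
  finally show ?thesis .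
qed

section \<open>Soundness of the rules\<close>

context
  fixes D :: defn
  assumes wf: "wf_defn D"
begin

lemma valid_conversion:
  assumes "valid D G C" "rel_mset feq G G'" "feq C C'"
  shows "valid D G' C'"
proof (rule validI)
  fix \<pi> v assume adm: "admissible D \<pi>" and v: "ground_val v" and G': "\<forall>F\<in>#G'. sat D \<pi> v F"
  have feq_sat: "sat D \<pi> v A = sat D \<pi> v B" if "feq A B" for A B
    by (rule holds_feq[OF that closed_env_env0 ground_val_closed_val[OF v]])
      (use conv_inv_defn_interp[OF wf] admissible_conv_inv[OF adm] conv_inv_pv0 in auto)
  have "\<forall>F\<in>#G. sat D \<pi> v F" using G' feq_sat rel_mset_ex_right[OF assms(2)] by metis
  then have "sat D \<pi> v C" using validD[OF assms(1) adm v] by blast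
  then show "sat D \<pi> v C'" using feq_sat[OF assms(3)] by simp
qed

lemma valid_mc:
  assumes "\<forall>x\<in>set xs. valid D (fst x) (snd x)" "valid D (mset (map snd xs) + G) C"
  shows "valid D (sum_list (map fst xs) + G) C"
proof (rule validI)
  fix \<pi> v assume adm: "admissible D \<pi>" and v: "ground_val v"
    and ctx: "\<forall>F\<in>#sum_list (map fst xs) + G. sat D \<pi> v F"
  have "sat D \<pi> v (snd x)" if x: "x \<in> set xs" for x
    using validD[of D "fst x" "snd x", OF _ adm v] assms(1) x ctx mem_sum_list_map_fst[OF x] by auto
  then have "\<forall>F\<in>#mset (map snd xs) + G. sat D \<pi> v F" using ctx by auto
  then show "sat D \<pi> v C" using validD[OF assms(2) adm v] by blast
qed

lemma valid_allL:
  assumes "valid D (G + {#substf A 0 t#}) C" "hastype [] t T"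
  shows "valid D (G + {#All T A#}) C"
proof (rule validI)
  fix \<pi> v assume adm: "admissible D \<pi>" and v: "ground_val v" and ctx: "\<forall>F\<in>#G + {#All T A#}. sat D \<pi> v F"
  then have "sat D \<pi> v (substf A 0 t)" using ground_inst[OF assms(2) v] by (simp add: holds_substf_0)
  then show "sat D \<pi> v C" using validD[OF assms(1) adm v] ctx by simp
qed

lemma valid_exR:
  assumes "valid D G (substf A 0 t)" "hastype [] t T"
  shows "valid D G (Ex T A)"
proof (rule validI)
  fix \<pi> v assume adm: "admissible D \<pi>" and v: "ground_val v" and ctx: "\<forall>F\<in>#G. sat D \<pi> v F"
  then have "sat D \<pi> v (substf A 0 t)" using validD[OF assms(1)] by blast
  then show "sat D \<pi> v (Ex T A)" using ground_inst[OF assms(2) v] by (auto simp: holds_substf_0)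
qed

lemma valid_allR:
  assumes "valid D G (substf A 0 (Fv y T))" "(y, T) \<notin> fvs G \<union> fvf A"
  shows "valid D G (All T A)"
proof (rule validI)
  fix \<pi> v assume adm: "admissible D \<pi>" and v: "ground_val v" and ctx: "\<forall>F\<in>#G. sat D \<pi> v F"
  show "sat D \<pi> v (All T A)"
  proof (simp, intro allI impI)
    fix u assume u: "ground u T"
    define v' where "v' = (\<lambda>n S. if n = y \<and> S = T then u else v n S)"
    have fresh: "(y, T) \<notin> fvf F \<Longrightarrow> holds I \<pi> X v e F = holds I \<pi> X v' e F" for I X F e
      by (rule holds_cong_val) (auto simp: v'_def)
    have "\<forall>F\<in>#G. sat D \<pi> v' F" using ctx fresh assms(2) by (auto simp: fvs_def)
    then have "sat D \<pi> v' (substf A 0 (Fv y T))"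
      using validD[OF assms(1) adm] ground_val_fun_upd[OF v u] by (simp add: v'_def)
    then have "holds (defn_interp D) \<pi> pv0 v' (env_cons u env0) A" by (simp add: holds_substf_0 v'_def)
    then show "holds (defn_interp D) \<pi> pv0 v (env_cons u env0) A" using fresh assms(2) by simp
  qed
qed

lemma valid_exL:
  assumes "valid D (G + {#substf A 0 (Fv y T)#}) C" "(y, T) \<notin> fvs G \<union> fvf A \<union> fvf C"
  shows "valid D (G + {#Ex T A#}) C"
proof (rule validI)
  fix \<pi> v assume adm: "admissible D \<pi>" and v: "ground_val v" and ctx: "\<forall>F\<in>#G + {#Ex T A#}. sat D \<pi> v F"
  then obtain u where u: "ground u T" "holds (defn_interp D) \<pi> pv0 v (env_cons u env0) A" by auto
  define v' where "v' = (\<lambda>n S. if n = y \<and> S = T then u else v n S)"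
  have fresh: "(y, T) \<notin> fvf F \<Longrightarrow> holds I \<pi> X v e F = holds I \<pi> X v' e F" for I X F e
    by (rule holds_cong_val) (auto simp: v'_def)
  have "\<forall>F\<in>#G. sat D \<pi> v' F" using ctx fresh assms(2) by (auto simp: fvs_def)
  moreover have "sat D \<pi> v' (substf A 0 (Fv y T))"
    using u(2) fresh[of A] assms(2) by (simp add: holds_substf_0 v'_def)
  ultimately have "sat D \<pi> v' C"
    using validD[OF assms(1) adm] ground_val_fun_upd[OF v u(1)] by (simp add: v'_def)
  then show "sat D \<pi> v C" using fresh assms(2) by simp
qed

lemma valid_eqL:
  assumes "\<forall>\<rho>. wf_esub \<rho> \<longrightarrow> conv (esub \<rho> s) (esub \<rho> t) \<longrightarrow> valid D (image_mset (esubf \<rho>) G) (esubf \<rho> C)"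
    "hastype [] s T" "hastype [] t T"
  shows "valid D (G + {#Eq T s t#}) C"
proof (rule validI)
  fix \<pi> v assume adm: "admissible D \<pi>" and v: "ground_val v" and ctx: "\<forall>F\<in>#G + {#Eq T s t#}. sat D \<pi> v F"
  txt \<open>The valuation itself is a unifier of \<open>s\<close> and \<open>t\<close>, and it is idempotent on formulae.\<close>
  have "conv (esub v s) (esub v t)" using ctx by (simp add: inst_closed[OF assms(2)] inst_closed[OF assms(3)])
  moreover have "wf_esub v" using v by (simp add: ground_val_def wf_esub_def)
  ultimately have inst_valid: "valid D (image_mset (esubf v) G) (esubf v C)" using assms(1) by blast
  have "(\<lambda>n T. esub v (v n T)) = v" using v by (auto simp: ground_val_def esub_fvt_empty)
  then have esubf_sat: "sat D \<pi> v (esubf v F) = sat D \<pi> v F" for F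
    using holds_esubf[of v "defn_interp D" \<pi> pv0 v env0 F] v by (simp add: ground_val_def)
  then show "sat D \<pi> v C" using validD[OF inst_valid adm v] ctx by simp
qed

lemma valid_IL:
  assumes Dp: "D p = Some (Mu, b)" and S: "wf_inv p S" "distinct ys" "length ys = length (snd p)"
    and step: "valid D {#unfold b (instf S) (eigvars ys (snd p))#} (instf S (eigvars ys (snd p)))"
    and major: "valid D (G + {#instf S ts#}) C"
  shows "valid D (G + {#Atm p ts#}) C"
proof (rule validI)
  fix \<pi> v assume adm: "admissible D \<pi>" and v: "ground_val v" and ctx: "\<forall>F\<in>#G + {#Atm p ts#}. sat D \<pi> v F"
  define X where "X = inv_interp (defn_interp D) \<pi> v S"
  have "conv_inv X" unfolding X_def using conv_inv_inv_interp[OF wf adm] .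
  moreover have "prefixed (defn_interp D) p b X" unfolding prefixed_def
  proof (intro allI impI)
    fix as assume as: "list_all2 ground as (snd p)" and body: "body_holds (defn_interp D) b X as"
    have l: "length as = length (snd p)" using as by (rule list_all2_lengthD)
    have "ground_val (val_upd v ys (snd p) as)" using ground_val_val_upd[OF v as] .
    moreover have "sat D \<pi> (val_upd v ys (snd p) as) (unfold b (instf S) (eigvars ys (snd p)))"
      using body holds_unfold_instf_eigvars[OF wf Dp S l] by (simp add: X_def)
    ultimately have "sat D \<pi> (val_upd v ys (snd p) as) (instf S (eigvars ys (snd p)))"
      using validD[OF step adm] by simp
    then show "X as" using holds_instf_eigvars[OF S(1-3) l] by (simp add: X_def)
  qed
  moreover have "defn_interp D p (map (inst v env0 0) ts)" using ctx by simp
  ultimately have "X (map (inst v env0 0) ts)" using defn_interp_Mu[OF wf Dp] by blast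
  then have "sat D \<pi> v (instf S ts)" by (simp add: X_def holds_instf)
  then show "sat D \<pi> v C" using validD[OF major adm v] ctx by simp
qed

lemma valid_CIR:
  assumes Dp: "D p = Some (Nu, b)" and S: "wf_inv p S" "distinct ys" "length ys = length (snd p)"
    and major: "valid D G (instf S ts)"
    and step: "valid D {#instf S (eigvars ys (snd p))#} (unfold b (instf S) (eigvars ys (snd p)))"
  shows "valid D G (Atm p ts)"
proof (rule validI)
  fix \<pi> v assume adm: "admissible D \<pi>" and v: "ground_val v" and ctx: "\<forall>F\<in>#G. sat D \<pi> v F"
  define X where "X = inv_interp (defn_interp D) \<pi> v S"
  have "conv_inv X" unfolding X_def using conv_inv_inv_interp[OF wf adm] .
  moreover have "postfixed (defn_interp D) p b X" unfolding postfixed_def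
  proof (intro allI impI)
    fix as assume as: "list_all2 ground as (snd p)" and X: "X as"
    have l: "length as = length (snd p)" using as by (rule list_all2_lengthD)
    have "ground_val (val_upd v ys (snd p) as)" using ground_val_val_upd[OF v as] .
    moreover have "sat D \<pi> (val_upd v ys (snd p) as) (instf S (eigvars ys (snd p)))"
      using X holds_instf_eigvars[OF S(1-3) l] by (simp add: X_def)
    ultimately have "sat D \<pi> (val_upd v ys (snd p) as) (unfold b (instf S) (eigvars ys (snd p)))"
      using validD[OF step adm] by simp
    then show "body_holds (defn_interp D) b X as"
      using holds_unfold_instf_eigvars[OF wf Dp S l] by (simp add: X_def)
  qed
  moreover have "X (map (inst v env0 0) ts)" using validD[OF major adm v ctx] by (simp add: X_def holds_instf)
  ultimately show "sat D \<pi> v (Atm p ts)" using defn_interp_Nu[OF wf Dp] by auto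
qed

lemma holds_unfold_Par_body:
  assumes "D p = Some (k, b)" "length ts = length (snd p)"
  shows "holds I \<pi> Z v e (unfold b (Par p i) ts) = body_holds I b (\<pi> (p, i)) (map (inst v e 0) ts)"
  unfolding holds_unfold_Par by (rule holds_clause_body[OF wf assms(1)]) (simp add: assms(2))

lemma valid_IR:
  assumes Dp: "D p = Some (Mu, b)" and fresh: "(p, i) \<notin> pars G"
    and prem: "valid D G (unfold b (Par p i) ts)" and ts: "list_all2 (hastype []) ts (snd p)"
  shows "valid D G (Atm p ts)"
proof (rule validI)
  fix \<pi> v assume adm: "admissible D \<pi>" and v: "ground_val v" and ctx: "\<forall>F\<in>#G. sat D \<pi> v F"
  let ?as = "map (inst v env0 0) ts"
  have l: "length ts = length (snd p)" using ts by (rule list_all2_lengthD)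
  txt \<open>The fresh parameter may denote any pre-fixed point \<open>X\<close>.\<close>
  have "X ?as" if X: "conv_inv X" "prefixed (defn_interp D) p b X" for X
  proof -
    let ?\<pi> = "\<pi>((p, i) := X)"
    have "admissible D ?\<pi>" using admissible_fun_upd[OF adm X(1)] X(2) Dp by auto
    moreover have "\<forall>F\<in>#G. sat D ?\<pi> v F"
      using ctx fresh holds_cong_par[where \<pi> = \<pi> and \<pi>' = ?\<pi>] by (auto simp: pars_def)
    ultimately have "sat D ?\<pi> v (unfold b (Par p i) ts)" using validD[OF prem _ v] by blast
    then have "body_holds (defn_interp D) b X ?as"
      using holds_unfold_Par_body[OF Dp l] by simp
    then show "X ?as" using X(2) list_all2_ground_map_inst[OF ts v] by (simp add: prefixed_def)
  qed
  then show "sat D \<pi> v (Atm p ts)" using defn_interp_Mu[OF wf Dp] by auto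
qed

lemma valid_IRp:
  assumes Dp: "D p = Some (Mu, b)"
    and prem: "valid D G (unfold b (Par p i) ts)" and ts: "list_all2 (hastype []) ts (snd p)"
  shows "valid D G (Par p i ts)"
proof (rule validI)
  fix \<pi> v assume adm: "admissible D \<pi>" and v: "ground_val v" and ctx: "\<forall>F\<in>#G. sat D \<pi> v F"
  let ?as = "map (inst v env0 0) ts"
  have l: "length ts = length (snd p)" using ts by (rule list_all2_lengthD)
  have "sat D \<pi> v (unfold b (Par p i) ts)" using validD[OF prem adm v ctx] .
  then have "body_holds (defn_interp D) b (\<pi> (p, i)) ?as"
    using holds_unfold_Par_body[OF Dp l] by simp
  then show "sat D \<pi> v (Par p i ts)"
    using admissible_prefixed[OF adm Dp] list_all2_ground_map_inst[OF ts v] by (simp add: prefixed_def)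
qed

lemma valid_CIL:
  assumes Dp: "D p = Some (Nu, b)" and fresh: "(p, i) \<notin> pars G \<union> parsf C"
    and prem: "valid D (G + {#unfold b (Par p i) ts#}) C" and ts: "list_all2 (hastype []) ts (snd p)"
  shows "valid D (G + {#Atm p ts#}) C"
proof (rule validI)
  fix \<pi> v assume adm: "admissible D \<pi>" and v: "ground_val v" and ctx: "\<forall>F\<in>#G + {#Atm p ts#}. sat D \<pi> v F"
  let ?as = "map (inst v env0 0) ts"
  have l: "length ts = length (snd p)" using ts by (rule list_all2_lengthD)
  txt \<open>Let the fresh parameter denote a post-fixed point \<open>X\<close> witnessing \<open>p ts\<close>.\<close>
  obtain X where X: "conv_inv X" "postfixed (defn_interp D) p b X" "X ?as"
    using ctx defn_interp_Nu[OF wf Dp] by auto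
  let ?\<pi> = "\<pi>((p, i) := X)"
  have par_upd: "(p, i) \<notin> parsf F \<Longrightarrow> sat D ?\<pi> v F = sat D \<pi> v F" for F
    by (rule holds_cong_par) auto
  have "admissible D ?\<pi>" using admissible_fun_upd[OF adm X(1)] X(2) Dp by auto
  moreover have "body_holds (defn_interp D) b X ?as"
    using X(2,3) list_all2_ground_map_inst[OF ts v] by (simp add: postfixed_def)
  then have "sat D ?\<pi> v (unfold b (Par p i) ts)"
    using holds_unfold_Par_body[OF Dp l] by simp
  moreover have "\<forall>F\<in>#G. sat D ?\<pi> v F" using ctx fresh par_upd by (auto simp: pars_def)
  ultimately have "sat D ?\<pi> v C" using validD[OF prem _ v] by simp
  then show "sat D \<pi> v C" using par_upd fresh by simp
qed

lemma valid_CILp: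
  assumes Dp: "D p = Some (Nu, b)"
    and prem: "valid D (G + {#unfold b (Par p i) ts#}) C" and ts: "list_all2 (hastype []) ts (snd p)"
  shows "valid D (G + {#Par p i ts#}) C"
proof (rule validI)
  fix \<pi> v assume adm: "admissible D \<pi>" and v: "ground_val v" and ctx: "\<forall>F\<in>#G + {#Par p i ts#}. sat D \<pi> v F"
  let ?as = "map (inst v env0 0) ts"
  have l: "length ts = length (snd p)" using ts by (rule list_all2_lengthD)
  have "body_holds (defn_interp D) b (\<pi> (p, i)) ?as"
    using admissible_postfixed[OF adm Dp] ctx list_all2_ground_map_inst[OF ts v] by (simp add: postfixed_def)
  then have "sat D \<pi> v (unfold b (Par p i) ts)"
    using holds_unfold_Par_body[OF Dp l] by simp
  then show "sat D \<pi> v C" using validD[OF prem adm v] ctx by simp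
qed

theorem deriv_valid: "deriv D G C \<Longrightarrow> valid D G C"
proof (induction rule: deriv.induct)
  case (conversion G C G' C')
  then show ?case by (blast intro: valid_conversion)
next
  case (mc xs G C)
  then show ?case by (blast intro: valid_mc)
next
  case (allL G A t C T)
  then show ?case by (blast intro: valid_allL)
next
  case (allR G A y T)
  then show ?case by (blast intro: valid_allR)
next
  case (exL G A y T C)
  then show ?case by (blast intro: valid_exL)
next
  case (exR G A t T)
  then show ?case by (blast intro: valid_exR)
next
  case (eqL s t G C T)
  then show ?case by (intro valid_eqL) (auto simp: wfseq_def)
next
  case (IL p b S ys G ts C)
  then show ?case by (blast intro: valid_IL)
next
  case (IR p b i G ts)
  then show ?case by (intro valid_IR) (auto simp: wfseq_def)
next
  case (IRp p b G i ts)
  then show ?case by (intro valid_IRp) (auto simp: wfseq_def)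
next
  case (CIL p b i G C ts)
  then show ?case by (intro valid_CIL) (auto simp: wfseq_def)
next
  case (CILp p b G i ts C)
  then show ?case by (intro valid_CILp) (auto simp: wfseq_def)
next
  case (CIR p b S ys G ts)
  then show ?case by (blast intro: valid_CIR)
next
  case (disjL G A C B)
  then show ?case by (simp add: valid_def) blast
next
  case (eqR G T t)
  then show ?case by (simp add: valid_def conv_refl)
qed (simp_all add: valid_def)

end

definition par_trivial :: "defn \<Rightarrow> pinterp" where
  "par_trivial D = (\<lambda>(p, i). case D p of Some (Nu, _) \<Rightarrow> (\<lambda>_. False) | _ \<Rightarrow> (\<lambda>_. True))"

lemma admissible_par_trivial: "admissible D (par_trivial D)"
  by (auto simp: admissible_def par_trivial_def conv_inv_def prefixed_def postfixed_def
      split: option.splits kind.splits)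

lemma ground_val_val0: "ground_val val0"
  by (auto simp: ground_val_def val0_def intro: hastype.intros)

theorem mainTheorem2:
  assumes "wf_defn D"
    and "wff None [] C"
  shows "\<not> (deriv D {#} C \<and> deriv D {#} (Imp C Bot))"
proof
  assume "deriv D {#} C \<and> deriv D {#} (Imp C Bot)"
  then have "valid D {#} C" "valid D {#} (Imp C Bot)" using deriv_valid[OF assms(1)] by auto
  then have "sat D (par_trivial D) val0 C" and "sat D (par_trivial D) val0 (Imp C Bot)"
    by (auto dest: validD[OF _ admissible_par_trivial ground_val_val0])
  then show False by simp
qed

end
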